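(* Let $\lambda>0$ and let $\Sigma\in\mathbb{R}^{d\times d}$ be symmetric positive definite with simple spectrum $\sigma_1>\sigma_2>\cdots>\sigma_d>0$ and associated unit eigenvectors $u_1,\dots,u_d$. Define $\mathcal{R}_{\mathrm{soft},\infty}:\mathbb{R}^d\to\mathbb{R}$ by \[ \mathcal{R}_{\mathrm{soft},\infty}(\mu)=\operatorname{tr}(\Sigma)-2\lambda\,\mu^\top\Sigma^2\mu+\lambda^2(\mu^\top\Sigma\mu)(\mu^\top\Sigma^2\mu). \] Then all critical points of $\mathcal{R}_{\mathrm{soft},\infty}$ are nondegenerate, and \[ \mathrm{crit}(\mathcal{R}_{\mathrm{soft},\infty})=\{0\}\cup\Big\{\pm\tfrac{1}{\sqrt{\lambda\sigma_j}}u_j:\ j=1,\dots,d\Big\}. \] Moreover: (1) $0$ is a strict local maximum; (2) for $j=2,\dots,d$, the points $\pm\frac{1}{\sqrt{\lambda\sigma_j}}u_j$ are strict saddles; (3) the points $\pm\frac{1}{\sqrt{\lambda\sigma_1}}u_1$ are global minimizers of $\mathcal{R}_{\mathrm{soft},\infty}$.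
   Context: $\mathcal{R}_{\mathrm{soft},\infty}(\mu)$ equals $\mathbb{E}\big[\|X-\lambda\Sigma\mu\mu^\top X\|^2\big]$ for $X\sim\mathcal{N}(0,\Sigma)$, the population risk of the infinite-prompt limit of a rank-one softmax attention layer. A critical point is nondegenerate if the Hessian there is invertible; a strict saddle is a critical point whose Hessian has a negative eigenvalue and which is not a local minimum. *)

theory Defs
  imports "HOL-Analysis.Analysis"
begin

definition R_soft_inf :: "real \<Rightarrow> real^'n^'n \<Rightarrow> real^'n \<Rightarrow> real" where
  "R_soft_inf lam S mu =
     trace S - 2 * lam * (mu \<bullet> ((S ** S) *v mu))
     + lam\<^sup>2 * (mu \<bullet> (S *v mu)) * (mu \<bullet> ((S ** S) *v mu))"

definition grad :: "(real^'n \<Rightarrow> real) \<Rightarrow> real^'n \<Rightarrow> real^'n" where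
  "grad f x = (\<chi> i. frechet_derivative f (at x) (axis i 1))"

definition hessian :: "(real^'n \<Rightarrow> real) \<Rightarrow> real^'n \<Rightarrow> real^'n^'n" where
  "hessian f x = matrix (frechet_derivative (grad f) (at x))"

definition critical_point :: "(real^'n \<Rightarrow> real) \<Rightarrow> real^'n \<Rightarrow> bool" where
  "critical_point f x \<longleftrightarrow> f differentiable (at x) \<and> grad f x = 0"

definition nondegenerate_critical_point :: "(real^'n \<Rightarrow> real) \<Rightarrow> real^'n \<Rightarrow> bool" where
  "nondegenerate_critical_point f x \<longleftrightarrow>
     critical_point f x \<and> grad f differentiable (at x) \<and> invertible (hessian f x)"

definition is_eigenvalue :: "real^'n^'n \<Rightarrow> real \<Rightarrow> bool" where
  "is_eigenvalue A c \<longleftrightarrow> (\<exists>v. v \<noteq> 0 \<and> A *v v = c *\<^sub>R v)"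

definition local_min_at :: "(real^'n \<Rightarrow> real) \<Rightarrow> real^'n \<Rightarrow> bool" where
  "local_min_at f x \<longleftrightarrow> (\<exists>e>0. \<forall>y. dist y x < e \<longrightarrow> f x \<le> f y)"

definition strict_local_max_at :: "(real^'n \<Rightarrow> real) \<Rightarrow> real^'n \<Rightarrow> bool" where
  "strict_local_max_at f x \<longleftrightarrow> (\<exists>e>0. \<forall>y. 0 < dist y x \<and> dist y x < e \<longrightarrow> f y < f x)"

definition strict_saddle :: "(real^'n \<Rightarrow> real) \<Rightarrow> real^'n \<Rightarrow> bool" where
  "strict_saddle f x \<longleftrightarrow> critical_point f x \<and> grad f differentiable (at x)
     \<and> (\<exists>c<0. is_eigenvalue (hessian f x) c) \<and> \<not> local_min_at f x"

definition global_minimizer :: "(real^'n \<Rightarrow> real) \<Rightarrow> real^'n \<Rightarrow> bool" where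
  "global_minimizer f x \<longleftrightarrow> (\<forall>y. f x \<le> f y)"

end

theory Submission
  imports Defs
begin

text \<open>Write a = mu^T S mu and b = mu^T S^2 mu. The gradient of R equals
  2 lam S (lam b mu + (lam a - 2) S mu), so a nonzero critical point is an eigenvector t u_j of S,
  and then lam \<sigma>_j t^2 = 1. At such a point the Hessian is diagonal in the basis u_k, with
  eigenvalues 8 lam \<sigma>_j^2 (k = j) and 2 lam \<sigma>_k (\<sigma>_j - \<sigma>_k) (k \<noteq> j); at 0 they are
  -4 lam \<sigma>_k^2. Simplicity of the spectrum makes all of them nonzero, and for j > 1 the eigenvalue
  belonging to u_1 is negative; moving from t u_j in the direction u_1 indeed decreases R.
  Finally b \<le> \<sigma>_1 a gives R \<ge> tr S - \<sigma>_1 + (lam b - \<sigma>_1)^2 / \<sigma>_1, and tr S - \<sigma>_1 is the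
  value of R at t u_1.\<close>

lemma inner_matrix_vector_symmetric:
  fixes M :: "real^'n^'n"
  assumes "transpose M = M"
  shows "x \<bullet> (M *v y) = (M *v x) \<bullet> y"
  by (metis assms dot_lmul_matrix transpose_matrix_vector)

definition quad_form :: "real^'n^'n \<Rightarrow> real^'n \<Rightarrow> real" where
  "quad_form M x = x \<bullet> (M *v x)"

lemma has_derivative_quad_form:
  fixes M :: "real^'n^'n"
  assumes "transpose M = M"
  shows "(quad_form M has_derivative (\<lambda>h. 2 * ((M *v x) \<bullet> h))) (at x)"
proof -
  have "((\<lambda>x. x \<bullet> (M *v x)) has_derivative (\<lambda>h. x \<bullet> (M *v h) + h \<bullet> (M *v x))) (at x)"
    by (intro has_derivative_inner has_derivative_ident
        bounded_linear.has_derivative[OF matrix_vector_mul_bounded_linear])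
  moreover have "(\<lambda>h. x \<bullet> (M *v h) + h \<bullet> (M *v x)) = (\<lambda>h. 2 * ((M *v x) \<bullet> h))"
    using inner_matrix_vector_symmetric[OF assms] by (auto simp: inner_commute)
  ultimately show ?thesis
    by (simp add: quad_form_def[abs_def])
qed

lemma quad_form_scaled_eigvec:
  assumes "M *v v = a *\<^sub>R v" "norm v = 1"
  shows "quad_form M (t *\<^sub>R v) = t\<^sup>2 * a"
  using assms
  by (simp add: quad_form_def matrix_vector_mult_scaleR dot_square_norm power2_eq_square)

lemma quad_form_two_eigvecs:
  assumes "M *v v = a *\<^sub>R v" "M *v w = b *\<^sub>R w" "norm v = 1" "norm w = 1" "v \<bullet> w = 0"
  shows "quad_form M (s *\<^sub>R v + t *\<^sub>R w) = s\<^sup>2 * a + t\<^sup>2 * b"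
  using assms
  by (simp add: quad_form_def matrix_vector_mult_scaleR matrix_vector_right_distrib dot_square_norm
      inner_add_left inner_add_right inner_commute[of w v] power2_eq_square)

lemma mult_square_eq_1_iff:
  fixes c t :: real
  assumes "c > 0"
  shows "c * t\<^sup>2 = 1 \<longleftrightarrow> (\<exists>s\<in>{1, -1}. t = s / sqrt c)"
proof -
  have "c * t\<^sup>2 = 1 \<longleftrightarrow> t\<^sup>2 = (1 / sqrt c)\<^sup>2"
    using assms by (auto simp: power_divide field_simps)
  also have "\<dots> \<longleftrightarrow> t = 1 / sqrt c \<or> t = - (1 / sqrt c)"
    by (rule power2_eq_iff)
  finally show ?thesis
    by auto
qed

lemma grad_eqI:
  assumes "(f has_derivative (\<lambda>h. g \<bullet> h)) (at x)"
  shows "grad f x = g"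
proof -
  have "frechet_derivative f (at x) = (\<lambda>h. g \<bullet> h)"
    using assms frechet_derivative_at by metis
  then show ?thesis
    by (simp add: grad_def vec_eq_iff inner_axis)
qed

lemma critical_point_iff_gradient_eq_0:
  assumes "(f has_derivative (\<lambda>h. g \<bullet> h)) (at x)"
  shows "critical_point f x \<longleftrightarrow> g = 0"
  using assms grad_eqI unfolding critical_point_def differentiable_def by blast

lemma hessian_mult_vec_eq:
  assumes "\<And>x. (f has_derivative (\<lambda>h. g x \<bullet> h)) (at x)" and "(g has_derivative g') (at x)"
  shows "hessian f x *v h = g' h"
proof -
  have "grad f = g"
    using assms(1) grad_eqI by blast
  moreover have "frechet_derivative g (at x) = g'"
    using assms(2) frechet_derivative_at by metis
  moreover have "Vector_Spaces.linear (*s) (*s) g'"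
    using assms(2) has_derivative_linear linear_matrix_vector_mul_eq by blast
  ultimately show ?thesis
    unfolding hessian_def by (simp add: matrix_works)
qed

lemma R_soft_inf_eq_quad_form:
  "R_soft_inf lam S x = trace S - 2 * lam * quad_form (S ** S) x
     + lam\<^sup>2 * quad_form S x * quad_form (S ** S) x"
  by (simp add: R_soft_inf_def quad_form_def)

definition R_soft_inf_grad :: "real \<Rightarrow> real^'n^'n \<Rightarrow> real^'n \<Rightarrow> real^'n" where
  "R_soft_inf_grad lam S x = (2 * lam) *\<^sub>R ((lam * quad_form (S ** S) x) *\<^sub>R (S *v x)
     + (lam * quad_form S x - 2) *\<^sub>R ((S ** S) *v x))"

definition R_soft_inf_hess :: "real \<Rightarrow> real^'n^'n \<Rightarrow> real^'n \<Rightarrow> real^'n \<Rightarrow> real^'n" where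
  "R_soft_inf_hess lam S x h = (2 * lam) *\<^sub>R
     ((2 * lam * (((S ** S) *v x) \<bullet> h)) *\<^sub>R (S *v x) + (lam * quad_form (S ** S) x) *\<^sub>R (S *v h)
      + (2 * lam * ((S *v x) \<bullet> h)) *\<^sub>R ((S ** S) *v x)
      + (lam * quad_form S x - 2) *\<^sub>R ((S ** S) *v h))"

lemma symmetric_matrix_square:
  fixes S :: "real^'n^'n"
  shows "transpose S = S \<Longrightarrow> transpose (S ** S) = S ** S"
  by (simp add: matrix_transpose_mul)

lemma has_derivative_R_soft_inf:
  fixes S :: "real^'n^'n"
  assumes "transpose S = S"
  shows "(R_soft_inf lam S has_derivative (\<lambda>h. R_soft_inf_grad lam S x \<bullet> h)) (at x)"
proof -
  note dA = has_derivative_quad_form[OF assms]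
    and dB = has_derivative_quad_form[OF symmetric_matrix_square[OF assms]]
  have "((\<lambda>x. trace S - 2 * lam * quad_form (S ** S) x
        + lam\<^sup>2 * (quad_form S x * quad_form (S ** S) x))
     has_derivative (\<lambda>h. 0 - 2 * lam * (2 * (((S ** S) *v x) \<bullet> h))
        + lam\<^sup>2 * (quad_form S x * (2 * (((S ** S) *v x) \<bullet> h))
        + 2 * ((S *v x) \<bullet> h) * quad_form (S ** S) x))) (at x)"
    by (intro has_derivative_add has_derivative_diff has_derivative_const has_derivative_mult_right
        has_derivative_mult dA dB)
  then show ?thesis
    by (simp add: R_soft_inf_eq_quad_form[abs_def] R_soft_inf_grad_def inner_add_left
        algebra_simps power2_eq_square)
qed

lemma has_derivative_R_soft_inf_grad:
  fixes S :: "real^'n^'n"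
  assumes "transpose S = S"
  shows "(R_soft_inf_grad lam S has_derivative R_soft_inf_hess lam S x) (at x)"
proof -
  note dA = has_derivative_quad_form[OF assms]
    and dB = has_derivative_quad_form[OF symmetric_matrix_square[OF assms]]
  have lin: "((\<lambda>x. M *v x) has_derivative (\<lambda>h. M *v h)) (at x)" for M :: "real^'n^'n"
    by (simp add: bounded_linear.has_derivative[OF matrix_vector_mul_bounded_linear])
  show ?thesis
    unfolding R_soft_inf_grad_def[abs_def] R_soft_inf_hess_def[abs_def]
    by (rule derivative_eq_intros dA dB lin refl | simp add: algebra_simps)+
qed

lemma grad_R_soft_inf:
  fixes S :: "real^'n^'n"
  shows "transpose S = S \<Longrightarrow> grad (R_soft_inf lam S) = R_soft_inf_grad lam S"
  using grad_eqI has_derivative_R_soft_inf by blast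

lemma critical_point_R_soft_inf_iff:
  fixes S :: "real^'n^'n"
  shows "transpose S = S \<Longrightarrow> critical_point (R_soft_inf lam S) x \<longleftrightarrow> R_soft_inf_grad lam S x = 0"
  using critical_point_iff_gradient_eq_0 has_derivative_R_soft_inf by blast

lemma grad_R_soft_inf_differentiable:
  fixes S :: "real^'n^'n"
  shows "transpose S = S \<Longrightarrow> grad (R_soft_inf lam S) differentiable (at x)"
  using grad_R_soft_inf has_derivative_R_soft_inf_grad differentiable_def by metis

lemma hessian_R_soft_inf:
  fixes S :: "real^'n^'n"
  shows "transpose S = S \<Longrightarrow> hessian (R_soft_inf lam S) x *v h = R_soft_inf_hess lam S x h"
  using hessian_mult_vec_eq has_derivative_R_soft_inf has_derivative_R_soft_inf_grad by blast

locale simple_spectrum =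
  fixes S :: "real^'n^'n" and \<sigma> :: "nat \<Rightarrow> real" and u :: "nat \<Rightarrow> real^'n"
  assumes symmetric: "transpose S = S"
    and decreasing: "\<And>i j. i \<in> {1..CARD('n)} \<Longrightarrow> j \<in> {1..CARD('n)} \<Longrightarrow> i < j \<Longrightarrow> \<sigma> j < \<sigma> i"
    and eigenpair: "\<And>j. j \<in> {1..CARD('n)} \<Longrightarrow> S *v u j = \<sigma> j *\<^sub>R u j"
    and unit: "\<And>j. j \<in> {1..CARD('n)} \<Longrightarrow> norm (u j) = 1"
begin

lemma eigenvalue_eq_iff:
  "i \<in> {1..CARD('n)} \<Longrightarrow> j \<in> {1..CARD('n)} \<Longrightarrow> \<sigma> i = \<sigma> j \<longleftrightarrow> i = j"
  using decreasing[of i j] decreasing[of j i] by (cases i j rule: linorder_cases) auto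

lemma eigenvalue_le_first: "j \<in> {1..CARD('n)} \<Longrightarrow> \<sigma> j \<le> \<sigma> 1"
  using decreasing[of 1 j] by (cases "j = 1") auto

lemma eigvec_nonzero: "j \<in> {1..CARD('n)} \<Longrightarrow> u j \<noteq> 0"
  using unit by force

lemma inner_eigvec_self: "j \<in> {1..CARD('n)} \<Longrightarrow> u j \<bullet> u j = 1"
  using unit by (simp add: dot_square_norm)

lemma inner_eigvec_matrix: "j \<in> {1..CARD('n)} \<Longrightarrow> u j \<bullet> (S *v v) = \<sigma> j * (u j \<bullet> v)"
  by (simp add: inner_matrix_vector_symmetric[OF symmetric] eigenpair)

lemma eigvecs_orthogonal:
  assumes "i \<in> {1..CARD('n)}" "j \<in> {1..CARD('n)}" "i \<noteq> j"
  shows "u i \<bullet> u j = 0"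
proof -
  have "\<sigma> j * (u i \<bullet> u j) = \<sigma> i * (u i \<bullet> u j)"
    using inner_eigvec_matrix[of i "u j"] assms by (simp add: eigenpair)
  moreover have "\<sigma> i \<noteq> \<sigma> j"
    using eigenvalue_eq_iff assms by blast
  ultimately show ?thesis
    by auto
qed

lemma eigenpair_square: "j \<in> {1..CARD('n)} \<Longrightarrow> (S ** S) *v u j = (\<sigma> j)\<^sup>2 *\<^sub>R u j"
  by (simp add: eigenpair matrix_vector_mul_assoc[symmetric] matrix_vector_mult_scaleR
      power2_eq_square)

lemma eq_0_if_orthogonal_eigvecs:
  assumes orth: "\<And>k. k \<in> {1..CARD('n)} \<Longrightarrow> v \<bullet> u k = 0"
  shows "v = 0"
proof (rule ccontr)
  assume "v \<noteq> 0"
  let ?B = "insert v (u ` {1..CARD('n)})"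
  have "inj_on u {1..CARD('n)}"
    by (rule inj_onI) (metis eigvecs_orthogonal inner_eigvec_self zero_neq_one)
  moreover have "v \<notin> u ` {1..CARD('n)}"
    using orth inner_eigvec_self by force
  ultimately have "card ?B = CARD('n) + 1"
    by (simp add: card_image)
  moreover have "pairwise orthogonal ?B"
    using orth eigvecs_orthogonal
    by (auto simp: pairwise_def orthogonal_def inner_commute) metis
  then have "independent ?B"
    using \<open>v \<noteq> 0\<close> eigvec_nonzero by (intro pairwise_orthogonal_independent) auto
  then have "card ?B \<le> CARD('n)"
    using independent_bound by fastforce
  ultimately show False
    by simp
qed

lemma eigvec_expansion: "v = (\<Sum>k\<in>{1..CARD('n)}. (v \<bullet> u k) *\<^sub>R u k)"
proof -
  have "(\<Sum>k\<in>{1..CARD('n)}. (v \<bullet> u k) *\<^sub>R u k) \<bullet> u j = v \<bullet> u j" if j: "j \<in> {1..CARD('n)}" for j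
  proof -
    have "(\<Sum>k\<in>{1..CARD('n)}. (v \<bullet> u k) *\<^sub>R u k) \<bullet> u j
        = (\<Sum>k\<in>{1..CARD('n)}. if k = j then v \<bullet> u j else 0)"
      unfolding inner_sum_left using j eigvecs_orthogonal inner_eigvec_self by (intro sum.cong) auto
    then show ?thesis
      using j by simp
  qed
  then show ?thesis
    using eq_0_if_orthogonal_eigvecs[of "v - (\<Sum>k\<in>{1..CARD('n)}. (v \<bullet> u k) *\<^sub>R u k)"]
    by (simp add: inner_diff_left)
qed

lemma quad_form_eigen_expansion:
  assumes "transpose M = M" and "\<And>k. k \<in> {1..CARD('n)} \<Longrightarrow> M *v u k = a k *\<^sub>R u k"
  shows "quad_form M v = (\<Sum>k\<in>{1..CARD('n)}. a k * (v \<bullet> u k)\<^sup>2)"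
proof -
  have "quad_form M v = (\<Sum>k\<in>{1..CARD('n)}. (v \<bullet> u k) * (u k \<bullet> (M *v v)))"
    unfolding quad_form_def by (subst (1) eigvec_expansion) (simp add: inner_sum_left)
  also have "\<dots> = (\<Sum>k\<in>{1..CARD('n)}. a k * (v \<bullet> u k)\<^sup>2)"
    using assms
    by (intro sum.cong) (simp_all add: inner_matrix_vector_symmetric inner_commute power2_eq_square)
  finally show ?thesis .
qed

lemma invertible_if_eigenbasis:
  assumes eig: "\<And>k. k \<in> {1..CARD('n)} \<Longrightarrow> A *v u k = c k *\<^sub>R u k"
    and nonzero: "\<And>k. k \<in> {1..CARD('n)} \<Longrightarrow> c k \<noteq> 0"
  shows "invertible A"
proof -
  have "h = 0" if "A *v h = 0" for h
  proof (rule eq_0_if_orthogonal_eigvecs)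
    fix j assume j: "j \<in> {1..CARD('n)}"
    have "A *v h = A *v (\<Sum>k\<in>{1..CARD('n)}. (h \<bullet> u k) *\<^sub>R u k)"
      using eigvec_expansion[of h] by (rule arg_cong)
    also have "\<dots> = (\<Sum>k\<in>{1..CARD('n)}. (c k * (h \<bullet> u k)) *\<^sub>R u k)"
      by (simp add: linear_sum[OF matrix_vector_mul_linear] matrix_vector_mult_scaleR eig
          mult.commute)
    finally have "0 = (\<Sum>k\<in>{1..CARD('n)}. (c k * (h \<bullet> u k)) *\<^sub>R u k) \<bullet> u j"
      using that by simp
    also have "\<dots> = c j * (h \<bullet> u j)"
      unfolding inner_sum_left using j eigvecs_orthogonal inner_eigvec_self
      by (subst sum.remove[of _ j]) (auto intro!: sum.neutral)
    finally show "h \<bullet> u j = 0"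
      using nonzero[OF j] by simp
  qed
  then show ?thesis
    using invertible_left_inverse matrix_left_invertible_ker by blast
qed

lemma eigenvector_is_scaled_eigvec:
  assumes "v \<noteq> 0" and "S *v v = \<kappa> *\<^sub>R v"
  shows "\<exists>j\<in>{1..CARD('n)}. v = (v \<bullet> u j) *\<^sub>R u j"
proof -
  have comp: "(\<sigma> k - \<kappa>) * (v \<bullet> u k) = 0" if "k \<in> {1..CARD('n)}" for k
    using inner_eigvec_matrix[OF that, of v] assms(2) by (auto simp: inner_commute algebra_simps)
  obtain j where j: "j \<in> {1..CARD('n)}" "v \<bullet> u j \<noteq> 0"
    using eq_0_if_orthogonal_eigvecs assms(1) by blast
  have "(v - (v \<bullet> u j) *\<^sub>R u j) \<bullet> u k = 0" if k: "k \<in> {1..CARD('n)}" for k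
  proof (cases "k = j")
    case True
    then show ?thesis
      using inner_eigvec_self[OF j(1)] by (simp add: inner_diff_left)
  next
    case False
    then have "\<sigma> k \<noteq> \<kappa>"
      using comp[OF j(1)] j eigenvalue_eq_iff[OF k] by auto
    then show ?thesis
      using comp[OF k] eigvecs_orthogonal[OF j(1) k] False by (simp add: inner_diff_left)
  qed
  then show ?thesis
    using eq_0_if_orthogonal_eigvecs j(1) by fastforce
qed

lemma scaled_eigvec_eval:
  assumes "j \<in> {1..CARD('n)}"
  shows "quad_form S (t *\<^sub>R u j) = t\<^sup>2 * \<sigma> j"
    and "quad_form (S ** S) (t *\<^sub>R u j) = t\<^sup>2 * (\<sigma> j)\<^sup>2"
    and "S *v (t *\<^sub>R u j) = (t * \<sigma> j) *\<^sub>R u j"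
    and "(S ** S) *v (t *\<^sub>R u j) = (t * (\<sigma> j)\<^sup>2) *\<^sub>R u j"
  using assms by (simp_all add: quad_form_scaled_eigvec eigenpair eigenpair_square unit
      matrix_vector_mult_scaleR)

end

locale softmax_risk_setting = simple_spectrum S \<sigma> u
  for S :: "real^'n^'n" and \<sigma> :: "nat \<Rightarrow> real" and u :: "nat \<Rightarrow> real^'n" +
  fixes lam :: real
  assumes lam_pos: "lam > 0"
    and posdef: "\<And>x. x \<noteq> 0 \<Longrightarrow> x \<bullet> (S *v x) > 0"
begin

lemma eigenvalue_pos: "j \<in> {1..CARD('n)} \<Longrightarrow> \<sigma> j > 0"
  using posdef[OF eigvec_nonzero] by (simp add: eigenpair inner_eigvec_self)

lemma matrix_vector_eq_0_iff: "S *v v = 0 \<longleftrightarrow> v = 0"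
  by (metis posdef inner_zero_right less_irrefl matrix_vector_mult_0_right)

lemma quad_form_square_eq: "quad_form (S ** S) v = (S *v v) \<bullet> (S *v v)"
  by (simp add: quad_form_def matrix_vector_mul_assoc[symmetric]
      inner_matrix_vector_symmetric[OF symmetric])

lemma quad_form_square_pos: "v \<noteq> 0 \<Longrightarrow> quad_form (S ** S) v > 0"
  by (simp add: quad_form_square_eq matrix_vector_eq_0_iff)

lemma quad_form_square_le: "quad_form (S ** S) v \<le> \<sigma> 1 * quad_form S v"
proof -
  have "quad_form (S ** S) v = (\<Sum>k\<in>{1..CARD('n)}. (\<sigma> k)\<^sup>2 * (v \<bullet> u k)\<^sup>2)"
    using symmetric_matrix_square[OF symmetric] eigenpair_square by (rule quad_form_eigen_expansion)
  also have "\<dots> \<le> (\<Sum>k\<in>{1..CARD('n)}. \<sigma> 1 * (\<sigma> k * (v \<bullet> u k)\<^sup>2))"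
  proof (intro sum_mono)
    fix k assume "k \<in> {1..CARD('n)}"
    then have "(\<sigma> k)\<^sup>2 \<le> \<sigma> 1 * \<sigma> k"
      using eigenvalue_pos eigenvalue_le_first by (simp add: power2_eq_square)
    then show "(\<sigma> k)\<^sup>2 * (v \<bullet> u k)\<^sup>2 \<le> \<sigma> 1 * (\<sigma> k * (v \<bullet> u k)\<^sup>2)"
      by (metis mult.assoc mult_right_mono zero_le_power2)
  qed
  also have "\<dots> = \<sigma> 1 * quad_form S v"
    using quad_form_eigen_expansion[OF symmetric eigenpair] by (simp add: sum_distrib_left)
  finally show ?thesis .
qed

lemma R_soft_inf_grad_scaled_eigvec:
  assumes "j \<in> {1..CARD('n)}"
  shows "R_soft_inf_grad lam S (t *\<^sub>R u j)
    = (4 * lam * t * (\<sigma> j)\<^sup>2 * (lam * \<sigma> j * t\<^sup>2 - 1)) *\<^sub>R u j"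
proof -
  have "R_soft_inf_grad lam S (t *\<^sub>R u j)
      = (2 * lam * (lam * (t\<^sup>2 * (\<sigma> j)\<^sup>2) * (t * \<sigma> j)
          + (lam * (t\<^sup>2 * \<sigma> j) - 2) * (t * (\<sigma> j)\<^sup>2))) *\<^sub>R u j"
    by (simp add: R_soft_inf_grad_def scaled_eigvec_eval[OF assms] flip: scaleR_add_left)
  also have "\<dots> = (4 * lam * t * (\<sigma> j)\<^sup>2 * (lam * \<sigma> j * t\<^sup>2 - 1)) *\<^sub>R u j"
    by (simp add: algebra_simps power2_eq_square)
  finally show ?thesis .
qed

lemma R_soft_inf_grad_eq_0_iff:
  "R_soft_inf_grad lam S x = 0 \<longleftrightarrow>
     x = 0 \<or> (\<exists>j\<in>{1..CARD('n)}. \<exists>t. lam * \<sigma> j * t\<^sup>2 = 1 \<and> x = t *\<^sub>R u j)"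
proof
  assume grad0: "R_soft_inf_grad lam S x = 0"
  show "x = 0 \<or> (\<exists>j\<in>{1..CARD('n)}. \<exists>t. lam * \<sigma> j * t\<^sup>2 = 1 \<and> x = t *\<^sub>R u j)"
  proof (cases "x = 0")
    case False
    define a where "a = lam * quad_form (S ** S) x"
    define b where "b = lam * quad_form S x - 2"
    have "R_soft_inf_grad lam S x = (2 * lam) *\<^sub>R (S *v (a *\<^sub>R x + b *\<^sub>R (S *v x)))"
      by (simp add: R_soft_inf_grad_def a_def b_def matrix_vector_right_distrib
          matrix_vector_mult_scaleR
          matrix_vector_mul_assoc)
    then have comb: "a *\<^sub>R x + b *\<^sub>R (S *v x) = 0"
      using grad0 lam_pos by (simp add: matrix_vector_eq_0_iff)
    have "a > 0"
      using quad_form_square_pos[OF \<open>x \<noteq> 0\<close>] lam_pos by (simp add: a_def)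
    then have "b \<noteq> 0"
      using comb \<open>x \<noteq> 0\<close> by auto
    moreover have "b *\<^sub>R (S *v x) = - (a *\<^sub>R x)"
      by (metis comb add.commute eq_neg_iff_add_eq_0)
    ultimately have "S *v x = (- a / b) *\<^sub>R x"
      by (metis (no_types, lifting) scaleR_left_imp_eq scaleR_minus_left scaleR_scaleR
          times_divide_eq_right
          nonzero_mult_div_cancel_left)
    then obtain j where j: "j \<in> {1..CARD('n)}" and x_eq: "x = (x \<bullet> u j) *\<^sub>R u j"
      using eigenvector_is_scaled_eigvec \<open>x \<noteq> 0\<close> by blast
    define t where "t = x \<bullet> u j"
    have "t \<noteq> 0"
      using \<open>x \<noteq> 0\<close> x_eq by (auto simp: t_def)
    have "(4 * lam * t * (\<sigma> j)\<^sup>2 * (lam * \<sigma> j * t\<^sup>2 - 1)) *\<^sub>R u j = 0"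
      using grad0 x_eq R_soft_inf_grad_scaled_eigvec[OF j, of t] by (simp add: t_def)
    then have "lam * \<sigma> j * t\<^sup>2 = 1"
      using lam_pos \<open>t \<noteq> 0\<close> eigenvalue_pos[OF j] eigvec_nonzero[OF j] by simp
    then show ?thesis
      using j x_eq t_def by blast
  qed simp
next
  assume "x = 0 \<or> (\<exists>j\<in>{1..CARD('n)}. \<exists>t. lam * \<sigma> j * t\<^sup>2 = 1 \<and> x = t *\<^sub>R u j)"
  then show "R_soft_inf_grad lam S x = 0"
    by (auto simp: R_soft_inf_grad_scaled_eigvec R_soft_inf_grad_def[of lam S 0])
qed

lemma R_soft_inf_hess_0_eigvec:
  "k \<in> {1..CARD('n)} \<Longrightarrow> R_soft_inf_hess lam S 0 (u k) = (- 4 * lam * (\<sigma> k)\<^sup>2) *\<^sub>R u k"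
  by (simp add: R_soft_inf_hess_def quad_form_def eigenpair_square)

lemma R_soft_inf_hess_scaled_eigvec:
  assumes j: "j \<in> {1..CARD('n)}" and k: "k \<in> {1..CARD('n)}" and t: "lam * \<sigma> j * t\<^sup>2 = 1"
  shows "R_soft_inf_hess lam S (t *\<^sub>R u j) (u k)
    = (if k = j then 8 * lam * (\<sigma> j)\<^sup>2 else 2 * lam * \<sigma> k * (\<sigma> j - \<sigma> k)) *\<^sub>R u k"
proof (cases "k = j")
  case True
  have "R_soft_inf_hess lam S (t *\<^sub>R u j) (u k) = (2 * lam * (2 * lam * (t * (\<sigma> j)\<^sup>2) * (t * \<sigma> j)
      + lam * (t\<^sup>2 * (\<sigma> j)\<^sup>2) * \<sigma> j + 2 * lam * (t * \<sigma> j) * (t * (\<sigma> j)\<^sup>2)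
      + (lam * (t\<^sup>2 * \<sigma> j) - 2) * (\<sigma> j)\<^sup>2)) *\<^sub>R u j"
    using True j
    by (simp add: R_soft_inf_hess_def scaled_eigvec_eval eigenpair eigenpair_square
        inner_eigvec_self flip: scaleR_add_left)
  also have "\<dots> = (8 * lam * (\<sigma> j)\<^sup>2) *\<^sub>R u j"
    using t by (intro arg_cong[where f = "\<lambda>c. c *\<^sub>R u j"]) algebra
  finally show ?thesis
    using True by simp
next
  case False
  have "R_soft_inf_hess lam S (t *\<^sub>R u j) (u k)
      = (2 * lam * (lam * (t\<^sup>2 * (\<sigma> j)\<^sup>2) * \<sigma> k + (lam * (t\<^sup>2 * \<sigma> j) - 2) * (\<sigma> k)\<^sup>2)) *\<^sub>R u k"
    using False j k eigvecs_orthogonal[OF j k]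
    by (simp add: R_soft_inf_hess_def scaled_eigvec_eval eigenpair eigenpair_square inner_commute
        flip: scaleR_add_left)
  also have "\<dots> = (2 * lam * \<sigma> k * (\<sigma> j - \<sigma> k)) *\<^sub>R u k"
    using t by (intro arg_cong[where f = "\<lambda>c. c *\<^sub>R u k"]) algebra
  finally show ?thesis
    using False by simp
qed

lemma R_soft_inf_scaled_eigvec:
  assumes "j \<in> {1..CARD('n)}" and "lam * \<sigma> j * t\<^sup>2 = 1"
  shows "R_soft_inf lam S (t *\<^sub>R u j) = trace S - \<sigma> j"
proof -
  have "R_soft_inf lam S (t *\<^sub>R u j)
      = trace S - 2 * lam * (t\<^sup>2 * (\<sigma> j)\<^sup>2) + lam\<^sup>2 * (t\<^sup>2 * \<sigma> j) * (t\<^sup>2 * (\<sigma> j)\<^sup>2)"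
    by (simp add: R_soft_inf_eq_quad_form scaled_eigvec_eval[OF assms(1)])
  also have "\<dots> = trace S - \<sigma> j"
    using assms(2) by algebra
  finally show ?thesis .
qed

lemma R_soft_inf_lower_bound: "trace S - \<sigma> 1 \<le> R_soft_inf lam S y"
proof -
  let ?a = "quad_form S y" and ?b = "quad_form (S ** S) y"
  have "\<sigma> 1 > 0"
    using eigenvalue_pos by simp
  have "?b \<ge> 0"
    by (simp add: quad_form_square_eq)
  moreover have "?b / \<sigma> 1 \<le> ?a"
    using quad_form_square_le[of y] \<open>\<sigma> 1 > 0\<close> by (simp add: field_simps)
  ultimately have "lam\<^sup>2 * (?b / \<sigma> 1 * ?b) \<le> lam\<^sup>2 * (?a * ?b)"
    by (intro mult_left_mono mult_right_mono) auto
  moreover have "lam\<^sup>2 * (?b / \<sigma> 1 * ?b) - 2 * lam * ?b + \<sigma> 1 = (lam * ?b - \<sigma> 1)\<^sup>2 / \<sigma> 1"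
    using \<open>\<sigma> 1 > 0\<close> by (simp add: field_simps power2_eq_square)
  moreover have "(lam * ?b - \<sigma> 1)\<^sup>2 / \<sigma> 1 \<ge> 0"
    using \<open>\<sigma> 1 > 0\<close> by simp
  ultimately show ?thesis
    by (simp add: R_soft_inf_eq_quad_form algebra_simps)
qed

lemma R_soft_inf_strict_local_max_0: "strict_local_max_at (R_soft_inf lam S) 0"
proof -
  have "continuous (at 0) (quad_form S)"
    using has_derivative_quad_form[OF symmetric] has_derivative_continuous by blast
  then obtain e where "e > 0"
    and e: "\<forall>y. dist y 0 < e \<longrightarrow> dist (quad_form S y) (quad_form S 0) < 2 / lam"
    unfolding continuous_at_eps_delta using lam_pos by (meson divide_pos_pos zero_less_numeral)
  have "R_soft_inf lam S y < R_soft_inf lam S 0" if "0 < dist y 0" "dist y 0 < e" for y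
  proof -
    have "lam * quad_form S y - 2 < 0"
      using e that(2) lam_pos by (simp add: quad_form_def dist_real_def field_simps abs_less_iff)
    moreover have "lam * quad_form (S ** S) y > 0"
      using quad_form_square_pos[of y] that(1) lam_pos by simp
    ultimately have "lam * quad_form (S ** S) y * (lam * quad_form S y - 2) < 0"
      by (simp add: mult_pos_neg)
    then show ?thesis
      by (simp add: R_soft_inf_eq_quad_form quad_form_def algebra_simps power2_eq_square)
  qed
  then show ?thesis
    unfolding strict_local_max_at_def using \<open>e > 0\<close> by blast
qed

lemma R_soft_inf_towards_first_eigvec:
  assumes j: "j \<in> {1..CARD('n)}" "j \<noteq> 1" and t: "lam * \<sigma> j * t\<^sup>2 = 1"
  shows "R_soft_inf lam S (t *\<^sub>R u j + \<tau> *\<^sub>R u 1)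
    = trace S - \<sigma> j - lam * \<sigma> 1 * \<tau>\<^sup>2 * (\<sigma> 1 - \<sigma> j - lam * (\<sigma> 1)\<^sup>2 * \<tau>\<^sup>2)"
proof -
  have one: "1 \<in> {1..CARD('n)}"
    by simp
  have "R_soft_inf lam S (t *\<^sub>R u j + \<tau> *\<^sub>R u 1)
      = trace S - 2 * lam * (t\<^sup>2 * (\<sigma> j)\<^sup>2 + \<tau>\<^sup>2 * (\<sigma> 1)\<^sup>2)
        + lam\<^sup>2 * (t\<^sup>2 * \<sigma> j + \<tau>\<^sup>2 * \<sigma> 1) * (t\<^sup>2 * (\<sigma> j)\<^sup>2 + \<tau>\<^sup>2 * (\<sigma> 1)\<^sup>2)"
    using quad_form_two_eigvecs[OF eigenpair[OF j(1)] eigenpair[OF one] unit[OF j(1)] unit[OF one]]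
      quad_form_two_eigvecs[OF eigenpair_square[OF j(1)] eigenpair_square[OF one]
        unit[OF j(1)] unit[OF one]]
      eigvecs_orthogonal[OF j(1) one j(2)]
    by (simp add: R_soft_inf_eq_quad_form)
  also have "\<dots> = trace S - \<sigma> j - lam * \<sigma> 1 * \<tau>\<^sup>2 * (\<sigma> 1 - \<sigma> j - lam * (\<sigma> 1)\<^sup>2 * \<tau>\<^sup>2)"
    using t by algebra
  finally show ?thesis .
qed

lemma not_local_min_at_scaled_eigvec:
  assumes j: "j \<in> {1..CARD('n)}" "j \<noteq> 1" and t: "lam * \<sigma> j * t\<^sup>2 = 1"
  shows "\<not> local_min_at (R_soft_inf lam S) (t *\<^sub>R u j)"
proof
  assume "local_min_at (R_soft_inf lam S) (t *\<^sub>R u j)"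
  then obtain e where "e > 0"
    and min: "\<And>y. dist y (t *\<^sub>R u j) < e \<Longrightarrow> R_soft_inf lam S (t *\<^sub>R u j) \<le> R_soft_inf lam S y"
    unfolding local_min_at_def by blast
  have "\<sigma> 1 > 0" "\<sigma> j < \<sigma> 1"
    using eigenvalue_pos decreasing[of 1 j] j by auto
  define q where "q = (\<sigma> 1 - \<sigma> j) / (lam * (\<sigma> 1)\<^sup>2)"
  have "q > 0"
    using \<open>\<sigma> j < \<sigma> 1\<close> \<open>\<sigma> 1 > 0\<close> lam_pos by (simp add: q_def)
  define \<tau> where "\<tau> = min (e / 2) (min 1 q / 2)"
  have "0 < \<tau>" "\<tau> < e" "\<tau> \<le> 1" "\<tau> < q"
    using \<open>e > 0\<close> \<open>q > 0\<close> by (auto simp: \<tau>_def)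
  then have "\<tau>\<^sup>2 \<le> \<tau>"
    by (simp add: power2_eq_square mult_le_cancel_left1)
  then have "\<tau>\<^sup>2 < q"
    using \<open>\<tau> < q\<close> by linarith
  then have "\<sigma> 1 - \<sigma> j - lam * (\<sigma> 1)\<^sup>2 * \<tau>\<^sup>2 > 0"
    using \<open>\<sigma> 1 > 0\<close> lam_pos by (simp add: q_def field_simps)
  then have "lam * \<sigma> 1 * \<tau>\<^sup>2 * (\<sigma> 1 - \<sigma> j - lam * (\<sigma> 1)\<^sup>2 * \<tau>\<^sup>2) > 0"
    using \<open>0 < \<tau>\<close> \<open>\<sigma> 1 > 0\<close> lam_pos by simp
  then have "R_soft_inf lam S (t *\<^sub>R u j + \<tau> *\<^sub>R u 1) < R_soft_inf lam S (t *\<^sub>R u j)"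
    unfolding R_soft_inf_towards_first_eigvec[OF j t] R_soft_inf_scaled_eigvec[OF j(1) t]
    by linarith
  moreover have "dist (t *\<^sub>R u j + \<tau> *\<^sub>R u 1) (t *\<^sub>R u j) < e"
    using \<open>0 < \<tau>\<close> \<open>\<tau> < e\<close> unit[of 1] by (simp add: dist_norm)
  ultimately show False
    using min by fastforce
qed

lemma critical_point_R_soft_inf_iff_scaled_eigvec:
  "critical_point (R_soft_inf lam S) x \<longleftrightarrow>
     x = 0 \<or> (\<exists>j\<in>{1..CARD('n)}. \<exists>t. lam * \<sigma> j * t\<^sup>2 = 1 \<and> x = t *\<^sub>R u j)"
  using critical_point_R_soft_inf_iff[OF symmetric] R_soft_inf_grad_eq_0_iff by simp

lemma nondegenerate_critical_point_R_soft_inf: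
  assumes "critical_point (R_soft_inf lam S) x"
  shows "nondegenerate_critical_point (R_soft_inf lam S) x"
proof -
  have eigenvalue_nonzero: "\<sigma> k \<noteq> 0" if "k \<in> {1..CARD('n)}" for k
    using eigenvalue_pos[OF that] by simp
  have "invertible (hessian (R_soft_inf lam S) x)"
    using assms unfolding critical_point_R_soft_inf_iff_scaled_eigvec
  proof (elim disjE bexE exE conjE)
    assume "x = 0"
    show ?thesis
      using lam_pos eigenvalue_nonzero
      by (intro invertible_if_eigenbasis[where c = "\<lambda>k. - 4 * lam * (\<sigma> k)\<^sup>2"])
        (simp_all add: \<open>x = 0\<close> hessian_R_soft_inf[OF symmetric] R_soft_inf_hess_0_eigvec)
  next
    fix j t assume j: "j \<in> {1..CARD('n)}" and t: "lam * \<sigma> j * t\<^sup>2 = 1" and x: "x = t *\<^sub>R u j"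
    have "\<sigma> j \<noteq> \<sigma> k" if "k \<in> {1..CARD('n)}" "k \<noteq> j" for k
      using eigenvalue_eq_iff[OF that(1) j] that(2) by auto
    then show ?thesis
      using lam_pos eigenvalue_nonzero
      by (intro invertible_if_eigenbasis[where
            c = "\<lambda>k. if k = j then 8 * lam * (\<sigma> j)\<^sup>2 else 2 * lam * \<sigma> k * (\<sigma> j - \<sigma> k)"])
        (simp_all add: x hessian_R_soft_inf[OF symmetric] R_soft_inf_hess_scaled_eigvec[OF j _ t])
  qed
  then show ?thesis
    using assms grad_R_soft_inf_differentiable[OF symmetric]
    unfolding nondegenerate_critical_point_def by blast
qed

lemma strict_saddle_R_soft_inf:
  assumes j: "j \<in> {2..CARD('n)}" and t: "lam * \<sigma> j * t\<^sup>2 = 1"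
  shows "strict_saddle (R_soft_inf lam S) (t *\<^sub>R u j)"
proof -
  have j': "j \<in> {1..CARD('n)}" "j \<noteq> 1" and one: "1 \<in> {1..CARD('n)}"
    using j by auto
  have "hessian (R_soft_inf lam S) (t *\<^sub>R u j) *v u 1 = (2 * lam * \<sigma> 1 * (\<sigma> j - \<sigma> 1)) *\<^sub>R u 1"
    using R_soft_inf_hess_scaled_eigvec[OF j'(1) one t] j'(2)
    by (simp add: hessian_R_soft_inf[OF symmetric])
  moreover have "\<sigma> j < \<sigma> 1"
    using decreasing[OF one j'(1)] j' by auto
  then have "2 * lam * \<sigma> 1 * (\<sigma> j - \<sigma> 1) < 0"
    using eigenvalue_pos[OF one] lam_pos by (simp add: mult_pos_neg)
  ultimately have "\<exists>c<0. is_eigenvalue (hessian (R_soft_inf lam S) (t *\<^sub>R u j)) c"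
    using eigvec_nonzero[OF one] unfolding is_eigenvalue_def by blast
  then show ?thesis
    using critical_point_R_soft_inf_iff_scaled_eigvec grad_R_soft_inf_differentiable[OF symmetric]
      not_local_min_at_scaled_eigvec[OF j' t] j'(1) t
    unfolding strict_saddle_def by blast
qed

lemma global_minimizer_R_soft_inf:
  assumes "lam * \<sigma> 1 * t\<^sup>2 = 1"
  shows "global_minimizer (R_soft_inf lam S) (t *\<^sub>R u 1)"
  using R_soft_inf_scaled_eigvec[OF _ assms] R_soft_inf_lower_bound
  unfolding global_minimizer_def by simp

lemma scaled_eigvec_normalised_iff:
  "j \<in> {1..CARD('n)} \<Longrightarrow> lam * \<sigma> j * t\<^sup>2 = 1 \<longleftrightarrow> (\<exists>s\<in>{1, -1}. t = s / sqrt (lam * \<sigma> j))"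
  using mult_square_eq_1_iff lam_pos eigenvalue_pos by simp

lemma critical_points_R_soft_inf:
  "{x. critical_point (R_soft_inf lam S) x} =
     {0} \<union> {(s / sqrt (lam * \<sigma> j)) *\<^sub>R u j | s j. s \<in> {1, -1} \<and> j \<in> {1..CARD('n)}}"
proof -
  have "(\<exists>j\<in>{1..CARD('n)}. \<exists>t. lam * \<sigma> j * t\<^sup>2 = 1 \<and> x = t *\<^sub>R u j) \<longleftrightarrow>
      (\<exists>s j. x = (s / sqrt (lam * \<sigma> j)) *\<^sub>R u j \<and> s \<in> {1, -1} \<and> j \<in> {1..CARD('n)})"
    (is "?scaled \<longleftrightarrow> ?normalised") for x
  proof
    assume ?scaled
    then obtain j t where j: "j \<in> {1..CARD('n)}" and "lam * \<sigma> j * t\<^sup>2 = 1" "x = t *\<^sub>R u j"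
      by blast
    moreover obtain s where "s \<in> {1, -1}" "t = s / sqrt (lam * \<sigma> j)"
      using scaled_eigvec_normalised_iff[OF j] calculation(2) by blast
    ultimately show ?normalised
      by blast
  next
    assume ?normalised
    then obtain s j where "x = (s / sqrt (lam * \<sigma> j)) *\<^sub>R u j" "s \<in> {1, -1}" "j \<in> {1..CARD('n)}"
      by blast
    then show ?scaled
      using scaled_eigvec_normalised_iff[of j "s / sqrt (lam * \<sigma> j)"] by auto
  qed
  then show ?thesis
    unfolding critical_point_R_soft_inf_iff_scaled_eigvec by auto
qed

end

theorem proposition1:
  fixes lam :: real and S :: "real^'n^'n"
    and \<sigma> :: "nat \<Rightarrow> real" and u :: "nat \<Rightarrow> real^'n"
  assumes lam_pos: "lam > 0"
    and sym: "transpose S = S"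
    and posdef: "\<forall>x. x \<noteq> 0 \<longrightarrow> x \<bullet> (S *v x) > 0"
    and simple: "\<forall>i\<in>{1..CARD('n)}. \<forall>j\<in>{1..CARD('n)}. i < j \<longrightarrow> \<sigma> j < \<sigma> i"
    and last_pos: "\<sigma> (CARD('n)) > 0"
    and eig: "\<forall>j\<in>{1..CARD('n)}. S *v u j = \<sigma> j *\<^sub>R u j"
    and unit: "\<forall>j\<in>{1..CARD('n)}. norm (u j) = 1"
  shows "(\<forall>mu. critical_point (R_soft_inf lam S) mu
              \<longrightarrow> nondegenerate_critical_point (R_soft_inf lam S) mu)
    \<and> {mu. critical_point (R_soft_inf lam S) mu} =
        {0} \<union> {(s / sqrt (lam * \<sigma> j)) *\<^sub>R u j | s j. s \<in> {1, -1} \<and> j \<in> {1..CARD('n)}}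
    \<and> strict_local_max_at (R_soft_inf lam S) 0
    \<and> (\<forall>j\<in>{2..CARD('n)}. \<forall>s\<in>{1, -1::real}.
          strict_saddle (R_soft_inf lam S) ((s / sqrt (lam * \<sigma> j)) *\<^sub>R u j))
    \<and> (\<forall>s\<in>{1, -1::real}.
          global_minimizer (R_soft_inf lam S) ((s / sqrt (lam * \<sigma> 1)) *\<^sub>R u 1))"
proof -
  interpret softmax_risk_setting S \<sigma> u lam
    using lam_pos sym posdef simple eig unit by unfold_locales auto
  have normalised: "lam * \<sigma> j * (s / sqrt (lam * \<sigma> j))\<^sup>2 = 1"
    if "j \<in> {1..CARD('n)}" "s \<in> {1, -1}" for j s
    using scaled_eigvec_normalised_iff[OF that(1)] that(2) by blast
  show ?thesis
    using nondegenerate_critical_point_R_soft_inf critical_points_R_soft_inf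
      R_soft_inf_strict_local_max_0
      strict_saddle_R_soft_inf global_minimizer_R_soft_inf normalised
    by auto
qed

end
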